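(* For every integer $n\ge 2$ and every $L=2^n+k$ with $0\le k<2^n$, $$\mathcal{C}(L+1)-\mathcal{C}(L)=\begin{cases}3, & 0\le k<2^{n-1},\\ 2, & 2^{n-1}\le k<2^n.\end{cases}$$
   Context: Let $\mathcal{A}=\{a,x,y,z\}$ and let $\tau$ be the substitution (monoid morphism on finite words over $\mathcal{A}$) defined by $\tau(a)=axa$, $\tau(x)=y$, $\tau(y)=z$, $\tau(z)=x$. For a finite word $w$, $\mathrm{Sub}(w)$ denotes the set of finite (contiguous) subwords of $w$. Let $\mathrm{Sub}_\tau=\bigcup_{s\in\mathcal{A},\,n\in\mathbb{N}\cup\{0\}}\mathrm{Sub}(\tau^n(s))$. The word complexity is $\mathcal{C}(L)=$ the number of elements of $\mathrm{Sub}_\tau$ of length $L$. *)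

theory Defs
  imports Main "HOL-Library.Sublist"
begin

datatype letter = A | X | Y | Z

fun tau_letter :: "letter \<Rightarrow> letter list" where
  "tau_letter A = [A, X, A]"
| "tau_letter X = [Y]"
| "tau_letter Y = [Z]"
| "tau_letter Z = [X]"

definition tau :: "letter list \<Rightarrow> letter list" where
  "tau w = concat (map tau_letter w)"

definition Sub :: "letter list \<Rightarrow> letter list set" where
  "Sub w = {u. sublist u w}"

definition Sub_tau :: "letter list set" where
  "Sub_tau = (\<Union>s. \<Union>n. Sub ((tau ^^ n) [s]))"

definition complexity :: "nat \<Rightarrow> nat" where
  "complexity L = card {u \<in> Sub_tau. length u = L}"

end

theory Submission
  imports Defs
begin

text \<open>The infinite fixed point \<open>u\<close> of \<open>\<tau>\<close> starting with \<open>a\<close> satisfies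
  \<open>u(2q) = a\<close> and \<open>u(2q+1) = rot(u(q))\<close>, where \<open>rot\<close> cycles \<open>x \<mapsto> y \<mapsto> z \<mapsto> x\<close> and
  sends \<open>a\<close> to \<open>x\<close>; the words \<open>\<tau>\<^sup>n(a)\<close> are its prefixes, and the other letters only
  produce single letters, so \<open>\<C>(L)\<close> counts the length-\<open>L\<close> factors of \<open>u\<close>.
  A factor of length \<open>2m\<close> is obtained from a factor \<open>v\<close> of length \<open>m\<close> by interleaving
  \<open>a\<close> with \<open>rot(v)\<close>, in one of two phases; a factor of length \<open>2m+1\<close> similarly from a
  factor of length \<open>m\<close> or \<open>m+1\<close>. For \<open>m \<ge> 3\<close> the phase of a factor is determined
  (the letter \<open>z\<close> cannot occur at two odd positions at distance 2) and \<open>rot\<close> is injective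
  on factors, so \<open>\<C>(2m) = 2\<C>(m)\<close> and \<open>\<C>(2m+1) = \<C>(m) + \<C>(m+1)\<close>. Hence
  \<open>\<C>(L+1) - \<C>(L)\<close> only depends on \<open>L div 2\<close>, and induction on \<open>n\<close> reduces the
  claim to \<open>\<C>(4), \<dots>, \<C>(8) = 10, 13, 16, 18, 20\<close>.\<close>

fun rot :: "letter \<Rightarrow> letter" where
  "rot A = X" | "rot X = Y" | "rot Y = Z" | "rot Z = X"

function tau_fix :: "nat \<Rightarrow> letter" where
  "tau_fix p = (if even p then A else rot (tau_fix (p div 2)))"
  by auto
termination
  by (relation "measure id") (auto elim: oddE)

declare tau_fix.simps [simp del]

lemma tau_fix_even [simp]: "even p \<Longrightarrow> tau_fix p = A"
  by (subst tau_fix.simps) simp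

lemma tau_fix_Suc_double [simp]: "tau_fix (Suc (2 * q)) = rot (tau_fix q)"
  by (subst tau_fix.simps) simp

lemma rot_neq_A [simp]: "rot c \<noteq> A"
  by (cases c) auto

lemma rot_eq_Z_iff [simp]: "rot c = Z \<longleftrightarrow> c = Y"
  by (cases c) auto

lemma rot_eqD: "rot c = rot d \<Longrightarrow> c = d \<or> c = A \<and> d = Z \<or> c = Z \<and> d = A"
  by (cases c; cases d) auto

lemma tau_fix_eq_A_iff [simp]: "tau_fix p = A \<longleftrightarrow> even p"
  by (cases "even p") (auto elim!: oddE)

lemma UNIV_letter: "UNIV = {A, X, Y, Z}"
proof -
  have "c \<in> {A, X, Y, Z}" for c
    by (cases c) auto
  then show ?thesis
    by blast
qed

instance letter :: finite
  by standard (simp add: UNIV_letter)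

lemma range_tau_fix: "range tau_fix = UNIV"
proof -
  have "tau_fix 1 = X"
    using tau_fix_Suc_double[of 0] by simp
  moreover have "tau_fix 3 = Y"
    using tau_fix_Suc_double[of 1] \<open>tau_fix 1 = X\<close> by (simp add: numeral_3_eq_3)
  moreover have "tau_fix 7 = Z"
    using tau_fix_Suc_double[of 3] \<open>tau_fix 3 = Y\<close> by (simp add: eval_nat_numeral)
  ultimately have "{A, X, Y, Z} \<subseteq> range tau_fix"
    using tau_fix_even[of 0] by (metis empty_subsetI even_zero insert_subset rangeI)
  then show ?thesis
    using UNIV_letter by blast
qed

text \<open>Two odd positions at distance 2 cannot both carry \<open>Z\<close>: they are \<open>2j + 1\<close>
  and \<open>2j + 3\<close>, and \<open>Z\<close> at both would need \<open>Y\<close> at both \<open>j\<close> and \<open>j + 1\<close>,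
  hence both odd.\<close>
lemma rot_tau_fix_opposite_parity:
  assumes "odd r" "even s" "rot (tau_fix r) = rot (tau_fix s)"
  shows "rot (tau_fix (r + 2)) \<noteq> rot (tau_fix (s + 2))"
proof
  assume eq2: "rot (tau_fix (r + 2)) = rot (tau_fix (s + 2))"
  obtain j where r: "r = Suc (2 * j)"
    using \<open>odd r\<close> by (auto elim: oddE)
  have "tau_fix r = Z" "tau_fix (r + 2) = Z"
    using rot_eqD[OF assms(3)] rot_eqD[OF eq2] assms by auto
  moreover have "rot (tau_fix (Suc j)) = tau_fix (r + 2)"
    using tau_fix_Suc_double[of "Suc j"] r by simp
  ultimately have "tau_fix j = Y" "tau_fix (Suc j) = Y"
    using r by simp_all
  then show False
    by (metis tau_fix_eq_A_iff even_Suc letter.distinct(5))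
qed

definition factor :: "nat \<Rightarrow> nat \<Rightarrow> letter list" where
  "factor p L = map tau_fix [p..<p + L]"

definition factors :: "nat \<Rightarrow> letter list set" where
  "factors L = range (\<lambda>p. factor p L)"

lemma length_factor [simp]: "length (factor p L) = L"
  by (simp add: factor_def)

lemma factor_Suc: "factor p (Suc L) = factor p L @ [tau_fix (p + L)]"
  by (simp add: factor_def)

lemma nth_factor: "i < L \<Longrightarrow> factor p L ! i = tau_fix (p + i)"
  by (simp add: factor_def)

lemma factors_length: "v \<in> factors L \<Longrightarrow> length v = L"
  by (auto simp: factors_def)

lemma factors_nonempty: "v \<in> factors L \<Longrightarrow> 0 < L \<Longrightarrow> v \<noteq> []"
  using factors_length by fastforce

lemma finite_factors: "finite (factors L)"
proof (rule finite_subset)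
  show "factors L \<subseteq> {xs. set xs \<subseteq> UNIV \<and> length xs = L}"
    by (auto simp: factors_def)
  show "finite {xs :: letter list. set xs \<subseteq> UNIV \<and> length xs = L}"
    by (rule finite_lists_length_eq) simp
qed

lemma map_upt_double:
  "map f [2 * q..<2 * q + 2 * m] = concat (map (\<lambda>j. [f (2 * j), f (Suc (2 * j))]) [q..<q + m])"
  by (induction m) (simp_all add: numeral_2_eq_2 ac_simps)

definition lift_even :: "letter list \<Rightarrow> letter list" where
  "lift_even v = concat (map (\<lambda>c. [A, rot c]) v)"

definition lift_odd :: "letter list \<Rightarrow> letter list" where
  "lift_odd v = concat (map (\<lambda>c. [rot c, A]) v)"

lemma factor_double_double: "factor (2 * q) (2 * m) = lift_even (factor q m)"
  by (simp add: factor_def lift_even_def map_upt_double comp_def)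

lemma factor_Suc_double_double: "factor (Suc (2 * q)) (2 * m) = lift_odd (factor q m)"
proof -
  have "factor (Suc (2 * q)) (2 * m) = map (tau_fix \<circ> Suc) [2 * q..<2 * q + 2 * m]"
    by (simp add: factor_def map_Suc_upt[symmetric] del: upt_Suc)
  then show ?thesis
    by (simp add: map_upt_double lift_odd_def factor_def comp_def)
qed

lemma factor_double_Suc_double: "factor (2 * q) (Suc (2 * m)) = lift_even (factor q m) @ [A]"
  by (simp add: factor_Suc factor_double_double)

lemma factor_Suc_double_Suc_double:
  "factor (Suc (2 * q)) (Suc (2 * m)) = butlast (lift_odd (factor q (Suc m)))"
proof -
  have "tau_fix (Suc (2 * q) + 2 * m) = rot (tau_fix (q + m))"
    using tau_fix_Suc_double[of "q + m"] by (simp add: algebra_simps)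
  then show ?thesis
    by (simp add: factor_Suc factor_Suc_double_double lift_odd_def butlast_append)
qed

lemma range_even_odd: "range f = range (\<lambda>q. f (2 * q)) \<union> range (\<lambda>q. f (Suc (2 * q)))"
proof -
  have "f p \<in> range (\<lambda>q. f (2 * q)) \<union> range (\<lambda>q. f (Suc (2 * q)))" for p
    by (cases "even p") (auto elim!: evenE oddE)
  then show ?thesis
    by blast
qed

lemma factors_double: "factors (2 * m) = lift_even ` factors m \<union> lift_odd ` factors m"
proof -
  have "factors (2 * m) = range (\<lambda>q. factor (2 * q) (2 * m)) \<union> range (\<lambda>q. factor (Suc (2 * q)) (2 * m))"
    unfolding factors_def by (rule range_even_odd)
  then show ?thesis
    by (simp add: factor_double_double factor_Suc_double_double factors_def image_image)
qed

lemma factors_Suc_double: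
  "factors (Suc (2 * m)) =
     (\<lambda>v. lift_even v @ [A]) ` factors m \<union> (\<lambda>v. butlast (lift_odd v)) ` factors (Suc m)"
proof -
  have "factors (Suc (2 * m)) =
      range (\<lambda>q. factor (2 * q) (Suc (2 * m))) \<union> range (\<lambda>q. factor (Suc (2 * q)) (Suc (2 * m)))"
    unfolding factors_def by (rule range_even_odd)
  then show ?thesis
    by (simp add: factor_double_Suc_double factor_Suc_double_Suc_double factors_def image_image)
qed

lemma inj_on_map_rot_factors:
  assumes "3 \<le> k"
  shows "inj_on (map rot) (factors k)"
proof (rule inj_onI)
  fix v w
  assume "v \<in> factors k" "w \<in> factors k" and eq: "map rot v = map rot w"
  then obtain p q where v: "v = factor p k" and w: "w = factor q k"
    by (auto simp: factors_def)
  have rot_eq: "rot (tau_fix (p + i)) = rot (tau_fix (q + i))" if "i < k" for i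
    using arg_cong[OF eq, of "\<lambda>xs. xs ! i"] that by (simp add: v w nth_factor)
  have same_parity: "even p = even q"
  proof (rule ccontr)
    assume "even p \<noteq> even q"
    then consider "odd p" "even q" | "odd q" "even p"
      by auto
    then show False
    proof cases
      case 1
      then show False
        using rot_tau_fix_opposite_parity[of p q] rot_eq[of 0] rot_eq[of 2] assms by simp
    next
      case 2
      then show False
        using rot_tau_fix_opposite_parity[of q p] rot_eq[of 0, symmetric] rot_eq[of 2, symmetric] assms
        by simp
    qed
  qed
  have "tau_fix (p + i) = tau_fix (q + i)" if "i < k" for i
    using rot_eqD[OF rot_eq[OF that]] same_parity by auto
  then show "v = w"
    by (intro nth_equalityI) (simp_all add: v w nth_factor)
qed

lemma concat_map_pair_eqD:
  assumes "concat (map (\<lambda>c. [f c, g c]) v) = concat (map (\<lambda>c. [f c, g c]) w)"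
  shows "map f v = map f w \<and> map g v = map g w"
  using assms
proof (induction v arbitrary: w)
  case Nil
  then show ?case
    by simp
next
  case (Cons c v)
  then obtain d w' where "w = d # w'"
    by (cases w) auto
  with Cons show ?case
    by simp
qed

lemma lift_even_eqD: "lift_even v = lift_even w \<Longrightarrow> map rot v = map rot w"
  using concat_map_pair_eqD[of "\<lambda>_. A" rot v w] by (simp add: lift_even_def)

lemma lift_odd_eqD: "lift_odd v = lift_odd w \<Longrightarrow> map rot v = map rot w"
  using concat_map_pair_eqD[of rot "\<lambda>_. A" v w] by (simp add: lift_odd_def)

lemma lift_odd_butlast: "v \<noteq> [] \<Longrightarrow> lift_odd v = butlast (lift_odd v) @ [A]"
  by (induction v rule: rev_induct) (simp_all add: lift_odd_def butlast_append)

lemma lift_even_append: "lift_even (v @ w) = lift_even v @ lift_even w"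
  by (simp add: lift_even_def)

lemma lift_even_eq_Nil_iff [simp]: "lift_even v = [] \<longleftrightarrow> v = []"
  by (simp add: lift_even_def)

lemma hd_lift_even: "v \<noteq> [] \<Longrightarrow> hd (lift_even v) = A"
  by (cases v) (simp_all add: lift_even_def)

lemma hd_lift_odd: "v \<noteq> [] \<Longrightarrow> hd (lift_odd v) = rot (hd v)"
  by (cases v) (simp_all add: lift_odd_def)

lemma hd_butlast_lift_odd: "v \<noteq> [] \<Longrightarrow> hd (butlast (lift_odd v)) = rot (hd v)"
  by (cases v) (simp_all add: lift_odd_def)

lemma inj_on_if_refines:
  assumes "inj_on f S" "\<And>x y. h x = h y \<Longrightarrow> f x = f y"
  shows "inj_on h S"
  using assms unfolding inj_on_def by blast

lemma card_image_Un_disjoint: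
  assumes "finite S" "finite T" "inj_on f S" "inj_on g T" "f ` S \<inter> g ` T = {}"
  shows "card (f ` S \<union> g ` T) = card S + card T"
  using assms by (simp add: card_Un_disjoint card_image)

text \<open>For \<open>m \<ge> 3\<close> a factor is determined by its image under \<open>map rot\<close>, which
  both liftings retain; the two liftings are told apart by their first letter.\<close>
lemma card_factors_double:
  assumes "3 \<le> m"
  shows "card (factors (2 * m)) = 2 * card (factors m)"
proof -
  have nonempty: "v \<noteq> []" if "v \<in> factors m" for v
    using factors_nonempty[OF that] assms by simp
  have "inj_on lift_even (factors m)" "inj_on lift_odd (factors m)"
    using inj_on_map_rot_factors[OF assms] lift_even_eqD lift_odd_eqD by (blast intro: inj_on_if_refines)+
  moreover have "lift_even v \<noteq> lift_odd w" if "v \<in> factors m" "w \<in> factors m" for v w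
    using hd_lift_even[of v] hd_lift_odd[of w] nonempty that by (metis rot_neq_A)
  then have "lift_even ` factors m \<inter> lift_odd ` factors m = {}"
    by blast
  ultimately show ?thesis
    by (simp add: factors_double card_image_Un_disjoint finite_factors)
qed

lemma card_factors_Suc_double:
  assumes "3 \<le> m"
  shows "card (factors (Suc (2 * m))) = card (factors m) + card (factors (Suc m))"
proof -
  have nonempty: "v \<noteq> []" "w \<noteq> []" if "v \<in> factors m" "w \<in> factors (Suc m)" for v w
    using factors_nonempty that assms by simp_all
  have "inj_on (\<lambda>v. lift_even v @ [A]) (factors m)"
    using inj_on_map_rot_factors[OF assms] lift_even_eqD by (blast intro: inj_on_if_refines)
  moreover have "inj_on (\<lambda>v. butlast (lift_odd v)) (factors (Suc m))"
  proof (rule inj_onI)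
    fix v w
    assume v: "v \<in> factors (Suc m)" and w: "w \<in> factors (Suc m)"
      and "butlast (lift_odd v) = butlast (lift_odd w)"
    then have "lift_odd v = lift_odd w"
      using lift_odd_butlast factors_nonempty[OF v] factors_nonempty[OF w] by (metis zero_less_Suc)
    then show "v = w"
      using inj_onD[OF inj_on_map_rot_factors lift_odd_eqD v w] assms by simp
  qed
  moreover have "lift_even v @ [A] \<noteq> butlast (lift_odd w)" if "v \<in> factors m" "w \<in> factors (Suc m)" for v w
  proof -
    have "hd (lift_even v @ [A]) = A"
      using nonempty[OF that] by (simp add: hd_lift_even)
    moreover have "hd (butlast (lift_odd w)) \<noteq> A"
      using nonempty[OF that] by (simp add: hd_butlast_lift_odd)
    ultimately show ?thesis
      by metis
  qed
  then have "(\<lambda>v. lift_even v @ [A]) ` factors m \<inter> (\<lambda>v. butlast (lift_odd v)) ` factors (Suc m) = {}"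
    by blast
  ultimately show ?thesis
    by (simp add: factors_Suc_double card_image_Un_disjoint finite_factors)
qed

lemma tau_append: "tau (xs @ ys) = tau xs @ tau ys"
  by (simp add: tau_def)

lemma tau_pow_append: "(tau ^^ n) (xs @ ys) = (tau ^^ n) xs @ (tau ^^ n) ys"
  by (induction n) (simp_all add: tau_append)

lemma rot_pow_neq_A: "c \<noteq> A \<Longrightarrow> (rot ^^ n) c \<noteq> A"
  by (cases n) simp_all

lemma tau_pow_single: "c \<noteq> A \<Longrightarrow> (tau ^^ n) [c] = [(rot ^^ n) c]"
proof (induction n)
  case 0
  then show ?case
    by simp
next
  case (Suc n)
  have "tau [d] = [rot d]" if "d \<noteq> A" for d
    using that by (cases d) (simp_all add: tau_def)
  then show ?case
    using Suc rot_pow_neq_A by simp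
qed

lemma tau_pow_Suc_A: "(tau ^^ Suc n) [A] = (tau ^^ n) [A] @ [(rot ^^ n) X] @ (tau ^^ n) [A]"
proof -
  have "(tau ^^ Suc n) [A] = (tau ^^ n) ([A] @ [X] @ [A])"
    by (simp add: funpow_Suc_right tau_def del: funpow.simps)
  also have "\<dots> = (tau ^^ n) [A] @ (tau ^^ n) [X] @ (tau ^^ n) [A]"
    by (simp only: tau_pow_append)
  finally show ?thesis
    by (simp add: tau_pow_single)
qed

text \<open>Both \<open>(tau ^^ n) [A]\<close> and the prefix of length \<open>2 ^ Suc n - 1\<close> of \<open>tau_fix\<close>
  obey the recursion \<open>w (Suc n) = lift_even (w n) @ [A]\<close>.\<close>
lemma tau_pow_Suc_A_lift_even: "(tau ^^ Suc n) [A] = lift_even ((tau ^^ n) [A]) @ [A]"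
proof (induction n)
  case 0
  then show ?case
    by (simp add: tau_def lift_even_def)
next
  case (Suc n)
  define W where "W = (tau ^^ n) [A]"
  have "(tau ^^ Suc (Suc n)) [A] = (tau ^^ Suc n) [A] @ [(rot ^^ Suc n) X] @ (tau ^^ Suc n) [A]"
    by (rule tau_pow_Suc_A)
  also have "\<dots> = (lift_even W @ [A]) @ [rot ((rot ^^ n) X)] @ (lift_even W @ [A])"
    unfolding W_def Suc.IH by simp
  also have "\<dots> = lift_even (W @ [(rot ^^ n) X] @ W) @ [A]"
    by (simp add: lift_even_append lift_even_def)
  also have "W @ [(rot ^^ n) X] @ W = (tau ^^ Suc n) [A]"
    unfolding W_def by (rule tau_pow_Suc_A[symmetric])
  finally show ?case .
qed

lemma tau_pow_A: "(tau ^^ n) [A] = factor 0 (2 ^ Suc n - 1)"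
proof (induction n)
  case 0
  then show ?case
    by (simp add: factor_def)
next
  case (Suc n)
  have "Suc (2 * (2 ^ Suc n - 1)) = 2 ^ Suc (Suc n) - 1"
    using one_le_power[of "2::nat" n] by (simp; linarith)
  then show ?case
    using factor_double_Suc_double[of 0 "2 ^ Suc n - 1"] Suc
    by (simp only: tau_pow_Suc_A_lift_even mult_0_right)
qed

lemma sublist_factor_0_imp_factors:
  assumes "sublist v (factor 0 M)"
  shows "v \<in> factors (length v)"
proof -
  obtain ps ss where split: "factor 0 M = ps @ v @ ss"
    using assms by (auto simp: sublist_def)
  have "v = factor (length ps) (length v)"
  proof (rule nth_equalityI)
    fix i
    assume "i < length v"
    moreover have "length ps + length v \<le> M"
      using arg_cong[OF split, of length] by simp
    ultimately have "(ps @ v @ ss) ! (length ps + i) = tau_fix (length ps + i)"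
      by (simp flip: split add: nth_factor)
    then show "v ! i = factor (length ps) (length v) ! i"
      using \<open>i < length v\<close> by (simp add: nth_append nth_factor)
  qed simp
  then show ?thesis
    unfolding factors_def by blast
qed

lemma sublist_factor_factor_0: "p + L \<le> M \<Longrightarrow> sublist (factor p L) (factor 0 M)"
proof -
  assume "p + L \<le> M"
  then have "factor p L = take L (drop p (factor 0 M))"
    by (simp add: factor_def take_map drop_map)
  then show ?thesis
    by (metis sublist_drop sublist_order.order_trans sublist_take)
qed

lemma length_le_1_imp_factors: "length v \<le> 1 \<Longrightarrow> v \<in> factors (length v)"
proof -
  assume "length v \<le> 1"
  then consider "v = []" | c where "v = [c]"
    by (cases v) auto
  then show ?thesis
  proof cases
    case 1
    then show ?thesis
      by (auto simp: factors_def factor_def)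
  next
    case 2
    obtain p where "tau_fix p = c"
      using range_tau_fix by (metis UNIV_I imageE)
    then have "v = factor p 1"
      using 2 by (simp add: factor_def)
    then show ?thesis
      using 2 by (auto simp: factors_def)
  qed
qed

lemma Sub_tau_length_eq_factors: "{v \<in> Sub_tau. length v = L} = factors L"
proof (intro equalityI subsetI)
  fix v
  assume "v \<in> {v \<in> Sub_tau. length v = L}"
  then obtain s n where sub: "sublist v ((tau ^^ n) [s])" and len: "length v = L"
    by (auto simp: Sub_tau_def Sub_def)
  show "v \<in> factors L"
  proof (cases "s = A")
    case True
    then have "sublist v (factor 0 (2 ^ Suc n - 1))"
      using sub by (simp only: tau_pow_A)
    then show ?thesis
      using sublist_factor_0_imp_factors len by blast
  next
    case False
    then have "length v \<le> 1"
      using sublist_length_le[OF sub] by (simp add: tau_pow_single)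
    then show ?thesis
      using length_le_1_imp_factors len by blast
  qed
next
  fix v
  assume "v \<in> factors L"
  then obtain p where v: "v = factor p L"
    by (auto simp: factors_def)
  have "p + L < 2 ^ (p + L)"
    by (rule less_exp)
  then have "p + L \<le> 2 ^ Suc (p + L) - 1"
    by (simp; linarith)
  then have "sublist v ((tau ^^ (p + L)) [A])"
    unfolding v tau_pow_A by (rule sublist_factor_factor_0)
  then show "v \<in> {v \<in> Sub_tau. length v = L}"
    using v by (auto simp: Sub_tau_def Sub_def)
qed

lemma complexity_eq_card_factors: "complexity L = card (factors L)"
  unfolding complexity_def Sub_tau_length_eq_factors ..

lemma factors_1: "factors 1 = {[A], [X], [Y], [Z]}"
proof -
  have "factors 1 = (\<lambda>c. [c]) ` range tau_fix"
    by (auto simp: factors_def factor_def)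
  then show ?thesis
    by (simp add: range_tau_fix UNIV_letter)
qed

lemma factors_2: "factors 2 = {[A, X], [A, Y], [A, Z], [X, A], [Y, A], [Z, A]}"
  using factors_double[of 1] unfolding factors_1
  by (simp add: lift_even_def lift_odd_def insert_commute)

lemma factors_3: "factors 3 = {[A, X, A], [A, Y, A], [A, Z, A], [X, A, Y], [X, A, Z], [X, A, X], [Y, A, X], [Z, A, X]}"
  using factors_Suc_double[of 1] unfolding factors_1 Suc_1 factors_2
  by (simp add: lift_even_def lift_odd_def insert_commute)

lemma card_factors_3: "card (factors 3) = 8"
  by (simp add: factors_3)

lemma card_factors_4: "card (factors 4) = 10"
proof -
  have "factors 4 = {[A, X, A, Y], [A, X, A, Z], [A, X, A, X], [A, Y, A, X], [A, Z, A, X],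
      [X, A, Y, A], [X, A, Z, A], [X, A, X, A], [Y, A, X, A], [Z, A, X, A]}"
    using factors_double[of 2] unfolding factors_2
    by (simp add: lift_even_def lift_odd_def insert_commute)
  then show ?thesis
    by simp
qed

lemma card_factors_5: "card (factors 5) = 13"
proof -
  have "factors 5 = {[A, X, A, Y, A], [A, X, A, Z, A], [A, X, A, X, A], [A, Y, A, X, A], [A, Z, A, X, A],
      [X, A, Y, A, X], [X, A, Z, A, X], [X, A, X, A, X], [Y, A, X, A, Z], [Y, A, X, A, X],
      [Y, A, X, A, Y], [Z, A, X, A, Y], [X, A, X, A, Y]}"
    using factors_Suc_double[of 2]
    by (simp add: factors_2 factors_3 lift_even_def lift_odd_def insert_commute)
  then show ?thesis
    by simp
qed

lemma complexity_4_to_8: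
  "complexity 4 = 10" "complexity 5 = 13" "complexity 6 = 16" "complexity 7 = 18" "complexity 8 = 20"
  using card_factors_double[of 3] card_factors_Suc_double[of 3] card_factors_double[of 4]
    card_factors_3 card_factors_4 card_factors_5
  by (simp_all add: complexity_eq_card_factors)

lemma complexity_diff_double:
  assumes "3 \<le> m" and "L = 2 * m \<or> L = Suc (2 * m)"
  shows "int (complexity (Suc L)) - int (complexity L) = int (complexity (Suc m)) - int (complexity m)"
  using assms(2)
proof
  assume "L = 2 * m"
  then show ?thesis
    using card_factors_double[OF assms(1)] card_factors_Suc_double[OF assms(1)]
    by (simp add: complexity_eq_card_factors)
next
  assume "L = Suc (2 * m)"
  then show ?thesis
    using card_factors_double[of "Suc m"] card_factors_Suc_double[OF assms(1)] assms(1)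
    by (simp add: complexity_eq_card_factors)
qed

theorem mainTheorem7:
  fixes n k L :: nat
  assumes "n \<ge> 2" and "k < 2 ^ n" and "L = 2 ^ n + k"
  shows "int (complexity (L + 1)) - int (complexity L) =
           (if k < 2 ^ (n - 1) then 3 else 2)"
  using assms
proof (induction n arbitrary: k L rule: nat_induct_at_least)
  case base
  then have "L \<in> {4, 5, 6, 7}"
    by auto
  then show ?case
    using base complexity_4_to_8 by auto
next
  case (Suc n)
  define m where "m = 2 ^ n + k div 2"
  have "L = 2 * m \<or> L = Suc (2 * m)"
    using Suc.prems by (auto simp: m_def)
  moreover have "3 \<le> m"
    using power_increasing[OF \<open>2 \<le> n\<close>, of "2::nat"] by (simp add: m_def)
  ultimately have "int (complexity (L + 1)) - int (complexity L) =
      int (complexity (m + 1)) - int (complexity m)"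
    using complexity_diff_double by simp
  also have "\<dots> = (if k div 2 < 2 ^ (n - 1) then 3 else 2)"
    using Suc.IH[of "k div 2" m] Suc.prems by (simp add: m_def)
  also have "(k div 2 < 2 ^ (n - 1)) = (k < 2 ^ (Suc n - 1))"
    using \<open>2 \<le> n\<close> by (cases n) auto
  finally show ?case .
qed

end
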